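(* Let $A$ and $B$ be rings, $f : A \to B$ a ring homomorphism and $J$ a proper ideal of $B$. Assume that $f(\mathrm{Reg}(A)) \subseteq \mathrm{Reg}(B)$. If $A \bowtie^f J$ is a Prüfer ring, then $A$ is a Prüfer ring.
   Context: All rings are commutative with identity. For a ring homomorphism $f:A\to B$ and an ideal $J$ of $B$, $A \bowtie^f J := \{(a, f(a)+j) : a \in A, j \in J\}$, a subring of $A\times B$. $\mathrm{Reg}(R)$ is the set of regular elements (non-zero-divisors) of $R$. An ideal is regular if it contains a regular element. A ring $R$ is a Prüfer ring if every finitely generated regular ideal of $R$ is invertible. *)

theory Defs
  imports "HOL-Algebra.Algebra" "HOL-Algebra.Chinese_Remainder"
begin

definition regs :: "('a, 'm) ring_scheme \<Rightarrow> 'a set" where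
  "regs R = {r \<in> carrier R. \<forall>x \<in> carrier R. r \<otimes>\<^bsub>R\<^esub> x = \<zero>\<^bsub>R\<^esub> \<longrightarrow> x = \<zero>\<^bsub>R\<^esub>}"

section \<open>Total ring of fractions Q(R): classes of pairs (a,s), s regular\<close>

definition frac_rel :: "('a, 'm) ring_scheme \<Rightarrow> (('a \<times> 'a) \<times> ('a \<times> 'a)) set" where
  "frac_rel R = {((a, s), (b, t)). a \<in> carrier R \<and> b \<in> carrier R \<and> s \<in> regs R \<and> t \<in> regs R
                  \<and> a \<otimes>\<^bsub>R\<^esub> t = b \<otimes>\<^bsub>R\<^esub> s}"

definition frac :: "('a, 'm) ring_scheme \<Rightarrow> 'a \<Rightarrow> 'a \<Rightarrow> ('a \<times> 'a) set" where
  "frac R a s = frac_rel R `` {(a, s)}"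

definition fracs :: "('a, 'm) ring_scheme \<Rightarrow> ('a \<times> 'a) set set" where
  "fracs R = (carrier R \<times> regs R) // frac_rel R"

definition qadd :: "('a, 'm) ring_scheme \<Rightarrow> ('a \<times> 'a) set \<Rightarrow> ('a \<times> 'a) set \<Rightarrow> ('a \<times> 'a) set" where
  "qadd R U V = (let p = (SOME p. p \<in> U); q = (SOME q. q \<in> V)
                 in frac R ((fst p \<otimes>\<^bsub>R\<^esub> snd q) \<oplus>\<^bsub>R\<^esub> (fst q \<otimes>\<^bsub>R\<^esub> snd p)) (snd p \<otimes>\<^bsub>R\<^esub> snd q))"

definition qmul :: "('a, 'm) ring_scheme \<Rightarrow> ('a \<times> 'a) set \<Rightarrow> ('a \<times> 'a) set \<Rightarrow> ('a \<times> 'a) set" where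
  "qmul R U V = (let p = (SOME p. p \<in> U); q = (SOME q. q \<in> V)
                 in frac R (fst p \<otimes>\<^bsub>R\<^esub> fst q) (snd p \<otimes>\<^bsub>R\<^esub> snd q))"

definition canon :: "('a, 'm) ring_scheme \<Rightarrow> 'a \<Rightarrow> ('a \<times> 'a) set" where
  "canon R a = frac R a \<one>\<^bsub>R\<^esub>"

definition qsum :: "('a, 'm) ring_scheme \<Rightarrow> ('a \<times> 'a) set list \<Rightarrow> ('a \<times> 'a) set" where
  "qsum R xs = foldr (qadd R) xs (canon R \<zero>\<^bsub>R\<^esub>)"

definition frac_submodule :: "('a, 'm) ring_scheme \<Rightarrow> ('a \<times> 'a) set set \<Rightarrow> bool" where
  "frac_submodule R M \<longleftrightarrow> M \<subseteq> fracs R \<and> canon R \<zero>\<^bsub>R\<^esub> \<in> M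
     \<and> (\<forall>x \<in> M. \<forall>y \<in> M. qadd R x y \<in> M)
     \<and> (\<forall>r \<in> carrier R. \<forall>x \<in> M. qmul R (canon R r) x \<in> M)"

definition ideal_frac_prod :: "('a, 'm) ring_scheme \<Rightarrow> 'a set \<Rightarrow> ('a \<times> 'a) set set \<Rightarrow> ('a \<times> 'a) set set" where
  "ideal_frac_prod R I M =
     {qsum R (map (\<lambda>(i, x). qmul R (canon R i) x) ps) | ps. set ps \<subseteq> I \<times> M}"

definition invertible_ideal :: "('a, 'm) ring_scheme \<Rightarrow> 'a set \<Rightarrow> bool" where
  "invertible_ideal R I \<longleftrightarrow> (\<exists>M. frac_submodule R M \<and> ideal_frac_prod R I M = canon R ` carrier R)"

definition prufer_ring :: "('a, 'm) ring_scheme \<Rightarrow> bool" where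
  "prufer_ring R \<longleftrightarrow> (\<forall>I. ideal I R \<and> (\<exists>S. finite S \<and> S \<subseteq> carrier R \<and> I = genideal R S)
        \<and> I \<inter> regs R \<noteq> {} \<longrightarrow> invertible_ideal R I)"

definition amalg :: "('a, 'm) ring_scheme \<Rightarrow> ('b, 'n) ring_scheme \<Rightarrow> ('a \<Rightarrow> 'b) \<Rightarrow> 'b set \<Rightarrow> ('a \<times> 'b) ring" where
  "amalg A B f J = (RDirProd A B)\<lparr>carrier := {(a, f a \<oplus>\<^bsub>B\<^esub> j) | a j. a \<in> carrier A \<and> j \<in> J}\<rparr>"

end

theory Submission
  imports Defs
begin

text \<open>
  Let \<open>I = (S)\<close> be a finitely generated ideal of \<open>A\<close> containing a regular \<open>a\<close>.
  \<open>A\<close> is a retract of \<open>D = A \<bowtie>\<^sup>f J\<close> via \<open>x \<mapsto> (x, f x)\<close> and \<open>fst\<close>; the ideal \<open>I'\<close> of \<open>D\<close>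
  generated by the image of \<open>S\<close> is finitely generated and contains the regular element
  \<open>(a, f a)\<close>, so it is invertible. Transporting a relation \<open>1 = \<Sum> x\<^sub>k u\<^sub>k\<close> (with \<open>x\<^sub>k \<in> I'\<close>,
  \<open>u\<^sub>k \<in> I'\<^sup>-\<^sup>1\<close>) back to \<open>A\<close> shows \<open>a \<in> I (a A : I)\<close>, and for a regular \<open>a\<close> this membership
  already makes \<open>I\<close> invertible, with inverse \<open>{u \<in> Q(A). I u \<subseteq> A}\<close>.
\<close>

context cring
begin

lemma regs_carrier: "s \<in> regs R \<Longrightarrow> s \<in> carrier R"
  by (simp add: regs_def)

lemma one_regs: "\<one> \<in> regs R"
  by (simp add: regs_def)

lemma regs_cancel_zero: "s \<in> regs R \<Longrightarrow> x \<in> carrier R \<Longrightarrow> s \<otimes> x = \<zero> \<Longrightarrow> x = \<zero>"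
  by (simp add: regs_def)

lemma mult_regs:
  assumes s: "s \<in> regs R" and t: "t \<in> regs R"
  shows "s \<otimes> t \<in> regs R"
  unfolding regs_def
proof (intro CollectI conjI ballI impI)
  have sc: "s \<in> carrier R" and tc: "t \<in> carrier R" using s t by (simp_all add: regs_carrier)
  then show "s \<otimes> t \<in> carrier R" by simp
  fix x assume x: "x \<in> carrier R" and "s \<otimes> t \<otimes> x = \<zero>"
  then have "s \<otimes> (t \<otimes> x) = \<zero>" using sc tc by (simp add: m_assoc)
  then have "t \<otimes> x = \<zero>" using regs_cancel_zero[OF s] tc x by simp
  then show "x = \<zero>" using regs_cancel_zero[OF t] x by simp
qed

lemma regs_cancel:
  assumes t: "t \<in> regs R" and x: "x \<in> carrier R" and y: "y \<in> carrier R"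
    and eq: "x \<otimes> t = y \<otimes> t"
  shows "x = y"
proof -
  have tc: "t \<in> carrier R" using t by (rule regs_carrier)
  have "t \<otimes> (x \<ominus> y) = t \<otimes> x \<oplus> \<ominus> (t \<otimes> y)"
    using x y tc by (simp add: r_distr minus_eq r_minus)
  also have "\<dots> = \<zero>" using eq x y tc by (simp add: m_comm r_neg)
  finally have "x \<ominus> y = \<zero>" using regs_cancel_zero[OF t] x y by simp
  then show ?thesis using x y by simp
qed

section \<open>Arithmetic in the total ring of fractions\<close>

lemma frac_equiv: "equiv (carrier R \<times> regs R) (frac_rel R)"
proof (rule equivI)
  show "refl_on (carrier R \<times> regs R) (frac_rel R)"
    by (rule refl_onI) (auto simp: frac_rel_def)
  show "sym (frac_rel R)"
    by (auto simp: sym_def frac_rel_def)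
  show "trans (frac_rel R)"
  proof (rule transI)
    fix x y z assume xy: "(x, y) \<in> frac_rel R" and yz: "(y, z) \<in> frac_rel R"
    obtain a s b t c u where xyz: "x = (a, s)" "y = (b, t)" "z = (c, u)"
      by (cases x, cases y, cases z) blast
    have h: "a \<in> carrier R" "b \<in> carrier R" "c \<in> carrier R" "s \<in> regs R" "t \<in> regs R" "u \<in> regs R"
      and e1: "a \<otimes> t = b \<otimes> s" and e2: "b \<otimes> u = c \<otimes> t"
      using xy yz xyz by (auto simp: frac_rel_def)
    have c: "s \<in> carrier R" "t \<in> carrier R" "u \<in> carrier R" using h regs_carrier by auto
    have "(a \<otimes> u) \<otimes> t = (a \<otimes> t) \<otimes> u" using h c by (simp add: m_ac)
    also have "\<dots> = (b \<otimes> s) \<otimes> u" using e1 by simp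
    also have "\<dots> = (b \<otimes> u) \<otimes> s" using h c by (simp add: m_ac)
    also have "\<dots> = (c \<otimes> t) \<otimes> s" using e2 by simp
    also have "\<dots> = (c \<otimes> s) \<otimes> t" using h c by (simp add: m_ac)
    finally have "a \<otimes> u = c \<otimes> s" using regs_cancel[OF h(5)] h c by simp
    then show "(x, z) \<in> frac_rel R" using h xyz by (simp add: frac_rel_def)
  qed
qed (auto simp: frac_rel_def)

lemma frac_eq_iff:
  assumes "a \<in> carrier R" "b \<in> carrier R" "s \<in> regs R" "t \<in> regs R"
  shows "frac R a s = frac R b t \<longleftrightarrow> a \<otimes> t = b \<otimes> s"
proof -
  have "frac R a s = frac R b t \<longleftrightarrow> ((a, s), (b, t)) \<in> frac_rel R"
    unfolding frac_def by (rule eq_equiv_class_iff[OF frac_equiv]) (use assms in auto)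
  then show ?thesis using assms by (simp add: frac_rel_def)
qed

lemma frac_in: "a \<in> carrier R \<Longrightarrow> s \<in> regs R \<Longrightarrow> frac R a s \<in> fracs R"
  unfolding frac_def fracs_def by (rule quotientI) simp

lemma fracs_some:
  assumes "U \<in> fracs R"
  shows "fst (SOME p. p \<in> U) \<in> carrier R \<and> snd (SOME p. p \<in> U) \<in> regs R
     \<and> U = frac R (fst (SOME p. p \<in> U)) (snd (SOME p. p \<in> U))"
proof -
  define p where "p = (SOME p. p \<in> U)"
  obtain x where x: "x \<in> carrier R \<times> regs R" "U = frac_rel R `` {x}"
    using assms unfolding fracs_def by (auto elim: quotientE)
  have "x \<in> U" using x equiv_class_self[OF frac_equiv] by simp
  then have "p \<in> U" unfolding p_def by (rule someI)
  then have xp: "(x, p) \<in> frac_rel R" using x by simp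
  then have "U = frac R (fst p) (snd p)"
    using x equiv_class_eq[OF frac_equiv xp] by (simp add: frac_def)
  then show ?thesis using xp unfolding p_def by (auto simp: frac_rel_def)
qed

lemma fracs_cases:
  assumes "U \<in> fracs R"
  obtains a s where "a \<in> carrier R" "s \<in> regs R" "U = frac R a s"
  using fracs_some[OF assms] by blast

lemma frac_some_rep:
  assumes "a \<in> carrier R" "s \<in> regs R"
  obtains a' s' where "(SOME p. p \<in> frac R a s) = (a', s')" "a' \<in> carrier R" "s' \<in> regs R"
    "a' \<otimes> s = a \<otimes> s'"
proof -
  let ?p = "SOME p. p \<in> frac R a s"
  have "fst ?p \<in> carrier R" "snd ?p \<in> regs R" "frac R a s = frac R (fst ?p) (snd ?p)"
    using fracs_some[OF frac_in[OF assms]] by auto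
  then show ?thesis using that[of "fst ?p" "snd ?p"] frac_eq_iff assms by simp
qed

lemma qmul_frac:
  assumes "a \<in> carrier R" "s \<in> regs R" "b \<in> carrier R" "t \<in> regs R"
  shows "qmul R (frac R a s) (frac R b t) = frac R (a \<otimes> b) (s \<otimes> t)"
proof -
  obtain a' s' where 1: "(SOME p. p \<in> frac R a s) = (a', s')" "a' \<in> carrier R" "s' \<in> regs R"
    "a' \<otimes> s = a \<otimes> s'" using frac_some_rep assms by metis
  obtain b' t' where 2: "(SOME p. p \<in> frac R b t) = (b', t')" "b' \<in> carrier R" "t' \<in> regs R"
    "b' \<otimes> t = b \<otimes> t'" using frac_some_rep assms by metis
  have c: "s \<in> carrier R" "t \<in> carrier R" "s' \<in> carrier R" "t' \<in> carrier R"
    using assms 1 2 regs_carrier by auto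
  have "(a' \<otimes> b') \<otimes> (s \<otimes> t) = (a' \<otimes> s) \<otimes> (b' \<otimes> t)"
    using 1(2,3) 2(2,3) c assms by (simp add: m_ac)
  also have "\<dots> = (a \<otimes> s') \<otimes> (b \<otimes> t')" using 1 2 by simp
  also have "\<dots> = (a \<otimes> b) \<otimes> (s' \<otimes> t')" using 1(2,3) 2(2,3) c assms by (simp add: m_ac)
  finally have e: "(a' \<otimes> b') \<otimes> (s \<otimes> t) = (a \<otimes> b) \<otimes> (s' \<otimes> t')" .
  show ?thesis unfolding qmul_def Let_def 1 2 fst_conv snd_conv
    using 1 2 assms e by (simp add: frac_eq_iff mult_regs)
qed

lemma qadd_frac:
  assumes "a \<in> carrier R" "s \<in> regs R" "b \<in> carrier R" "t \<in> regs R"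
  shows "qadd R (frac R a s) (frac R b t) = frac R (a \<otimes> t \<oplus> b \<otimes> s) (s \<otimes> t)"
proof -
  obtain a' s' where 1: "(SOME p. p \<in> frac R a s) = (a', s')" "a' \<in> carrier R" "s' \<in> regs R"
    "a' \<otimes> s = a \<otimes> s'" using frac_some_rep assms by metis
  obtain b' t' where 2: "(SOME p. p \<in> frac R b t) = (b', t')" "b' \<in> carrier R" "t' \<in> regs R"
    "b' \<otimes> t = b \<otimes> t'" using frac_some_rep assms by metis
  have c: "s \<in> carrier R" "t \<in> carrier R" "s' \<in> carrier R" "t' \<in> carrier R"
    using assms 1 2 regs_carrier by auto
  have "(a' \<otimes> t' \<oplus> b' \<otimes> s') \<otimes> (s \<otimes> t) = (a' \<otimes> s) \<otimes> (t \<otimes> t') \<oplus> (b' \<otimes> t) \<otimes> (s \<otimes> s')"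
    using 1(2,3) 2(2,3) c assms by (simp add: m_ac l_distr r_distr)
  also have "\<dots> = (a \<otimes> s') \<otimes> (t \<otimes> t') \<oplus> (b \<otimes> t') \<otimes> (s \<otimes> s')" using 1 2 by simp
  also have "\<dots> = (a \<otimes> t \<oplus> b \<otimes> s) \<otimes> (s' \<otimes> t')"
    using 1(2,3) 2(2,3) c assms by (simp add: m_ac l_distr r_distr)
  finally have e: "(a' \<otimes> t' \<oplus> b' \<otimes> s') \<otimes> (s \<otimes> t) = (a \<otimes> t \<oplus> b \<otimes> s) \<otimes> (s' \<otimes> t')" .
  show ?thesis unfolding qadd_def Let_def 1 2 fst_conv snd_conv
    using 1 2 c assms e by (simp add: frac_eq_iff mult_regs)
qed

lemma qmul_closed: "U \<in> fracs R \<Longrightarrow> V \<in> fracs R \<Longrightarrow> qmul R U V \<in> fracs R"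
  by (elim fracs_cases) (simp add: qmul_frac frac_in mult_regs)

lemma qmul_qadd_distr:
  assumes "U \<in> fracs R" "V \<in> fracs R" "W \<in> fracs R"
  shows "qmul R U (qadd R V W) = qadd R (qmul R U V) (qmul R U W)"
  using assms
  by (elim fracs_cases) (simp add: regs_carrier qmul_frac qadd_frac mult_regs frac_eq_iff m_ac l_distr r_distr)

lemma qmul_left_commute:
  assumes "U \<in> fracs R" "V \<in> fracs R" "W \<in> fracs R"
  shows "qmul R U (qmul R V W) = qmul R V (qmul R U W)"
  using assms by (elim fracs_cases) (simp add: regs_carrier qmul_frac mult_regs m_lcomm)

lemma canon_in: "r \<in> carrier R \<Longrightarrow> canon R r \<in> fracs R"
  unfolding canon_def by (simp add: frac_in one_regs)

lemma canon_inj: "x \<in> carrier R \<Longrightarrow> y \<in> carrier R \<Longrightarrow> canon R x = canon R y \<Longrightarrow> x = y"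
  unfolding canon_def by (simp add: frac_eq_iff one_regs)

lemma qadd_canon: "x \<in> carrier R \<Longrightarrow> y \<in> carrier R \<Longrightarrow> qadd R (canon R x) (canon R y) = canon R (x \<oplus> y)"
  unfolding canon_def by (simp add: qadd_frac one_regs)

lemma qmul_canon: "x \<in> carrier R \<Longrightarrow> y \<in> carrier R \<Longrightarrow> qmul R (canon R x) (canon R y) = canon R (x \<otimes> y)"
  unfolding canon_def by (simp add: qmul_frac one_regs)

lemma qmul_canon_frac:
  "x \<in> carrier R \<Longrightarrow> a \<in> carrier R \<Longrightarrow> s \<in> regs R \<Longrightarrow> qmul R (canon R x) (frac R a s) = frac R (x \<otimes> a) s"
  unfolding canon_def by (simp add: qmul_frac one_regs regs_carrier)

lemma qadd_zero: "U \<in> fracs R \<Longrightarrow> qadd R U (canon R \<zero>) = U"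
  unfolding canon_def by (elim fracs_cases) (simp add: qadd_frac one_regs regs_carrier)

lemma qmul_zero: "U \<in> fracs R \<Longrightarrow> qmul R U (canon R \<zero>) = canon R \<zero>"
  unfolding canon_def
  by (elim fracs_cases) (simp add: qmul_frac one_regs regs_carrier mult_regs frac_eq_iff)

lemma qadd_frac_same_denom:
  "a \<in> carrier R \<Longrightarrow> b \<in> carrier R \<Longrightarrow> s \<in> regs R \<Longrightarrow> qadd R (frac R a s) (frac R b s) = frac R (a \<oplus> b) s"
  using regs_carrier[of s] by (simp add: qadd_frac mult_regs frac_eq_iff m_ac l_distr r_distr)

lemma frac_cancel: "x \<in> carrier R \<Longrightarrow> s \<in> regs R \<Longrightarrow> frac R (s \<otimes> x) s = canon R x"
  unfolding canon_def using regs_carrier[of s] by (simp add: one_regs frac_eq_iff m_comm)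

end

section \<open>Products of ideals with submodules of the ring of fractions\<close>

lemma ideal_frac_prod_zero: "canon R \<zero>\<^bsub>R\<^esub> \<in> ideal_frac_prod R I M"
  unfolding ideal_frac_prod_def qsum_def by (intro CollectI exI[of _ "[]"]) simp

lemma ideal_frac_prod_add:
  assumes "i \<in> I" "u \<in> M" "v \<in> ideal_frac_prod R I M"
  shows "qadd R (qmul R (canon R i) u) v \<in> ideal_frac_prod R I M"
proof -
  obtain ps where "set ps \<subseteq> I \<times> M" "v = qsum R (map (\<lambda>(i, x). qmul R (canon R i) x) ps)"
    using assms(3) unfolding ideal_frac_prod_def by blast
  then show ?thesis using assms(1,2) unfolding ideal_frac_prod_def qsum_def
    by (intro CollectI exI[of _ "(i, u) # ps"]) simp
qed

lemma ideal_frac_prod_induct [consumes 1, case_names zero add]: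
  assumes v: "v \<in> ideal_frac_prod R I M"
    and zero: "P (canon R \<zero>\<^bsub>R\<^esub>)"
    and add: "\<And>i u v. i \<in> I \<Longrightarrow> u \<in> M \<Longrightarrow> v \<in> ideal_frac_prod R I M \<Longrightarrow> P v
                \<Longrightarrow> P (qadd R (qmul R (canon R i) u) v)"
  shows "P v"
proof -
  define g where "g = (\<lambda>(i, x). qmul R (canon R i) x)"
  have "P (qsum R (map g ps))" if "set ps \<subseteq> I \<times> M" for ps
    using that
  proof (induction ps)
    case Nil
    then show ?case using zero by (simp add: qsum_def)
  next
    case (Cons q ps)
    obtain i u where q: "q = (i, u)" "i \<in> I" "u \<in> M" using Cons.prems by (cases q) auto
    have "qsum R (map g ps) \<in> ideal_frac_prod R I M"
      using Cons.prems unfolding ideal_frac_prod_def g_def by auto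
    then show ?case using add[OF q(2,3)] Cons q(1) by (simp add: qsum_def g_def)
  qed
  then show ?thesis using v unfolding ideal_frac_prod_def g_def by blast
qed

context cring
begin

lemma invertible_product_in_ring:
  assumes IM: "ideal_frac_prod R I M = canon R ` carrier R"
    and "M \<subseteq> fracs R" "I \<subseteq> carrier R" "x \<in> I" "u \<in> M"
  shows "qmul R (canon R x) u \<in> canon R ` carrier R"
proof -
  have "x \<in> carrier R" "u \<in> fracs R" using assms by auto
  then have "qmul R (canon R x) u \<in> fracs R" by (simp add: qmul_closed canon_in)
  then have "qmul R (canon R x) u = qadd R (qmul R (canon R x) u) (canon R \<zero>)"
    by (simp add: qadd_zero)
  also have "\<dots> \<in> ideal_frac_prod R I M"
    using assms by (intro ideal_frac_prod_add ideal_frac_prod_zero)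
  finally show ?thesis using IM by simp
qed

text \<open>The conductor \<open>(R :\<^sub>Q I) = {u \<in> Q(R). I u \<subseteq> R}\<close>; it is the candidate inverse of \<open>I\<close>.\<close>
definition frac_conductor :: "'a set \<Rightarrow> ('a \<times> 'a) set set" where
  "frac_conductor I = {u \<in> fracs R. \<forall>x \<in> I. qmul R (canon R x) u \<in> canon R ` carrier R}"

lemma frac_submodule_conductor:
  assumes I: "I \<subseteq> carrier R"
  shows "frac_submodule R (frac_conductor I)"
  unfolding frac_submodule_def
proof (intro conjI ballI)
  show "frac_conductor I \<subseteq> fracs R" unfolding frac_conductor_def by auto
  show "canon R \<zero> \<in> frac_conductor I"
    using I unfolding frac_conductor_def by (auto simp: canon_in qmul_zero)
next
  fix u v assume u: "u \<in> frac_conductor I" and v: "v \<in> frac_conductor I"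
  show "qadd R u v \<in> frac_conductor I"
    unfolding frac_conductor_def
  proof (intro CollectI conjI ballI)
    show "qadd R u v \<in> fracs R"
      using u v unfolding frac_conductor_def by (auto elim!: fracs_cases simp: qadd_frac frac_in mult_regs regs_carrier)
    fix x assume x: "x \<in> I"
    obtain r1 r2 where r: "r1 \<in> carrier R" "qmul R (canon R x) u = canon R r1"
      "r2 \<in> carrier R" "qmul R (canon R x) v = canon R r2"
      using u v x unfolding frac_conductor_def by blast
    have "qmul R (canon R x) (qadd R u v) = canon R (r1 \<oplus> r2)"
      using u v x r I unfolding frac_conductor_def by (auto simp: qmul_qadd_distr canon_in qadd_canon)
    then show "qmul R (canon R x) (qadd R u v) \<in> canon R ` carrier R" using r by auto
  qed
next
  fix r u assume r: "r \<in> carrier R" and u: "u \<in> frac_conductor I"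
  show "qmul R (canon R r) u \<in> frac_conductor I"
    unfolding frac_conductor_def
  proof (intro CollectI conjI ballI)
    show "qmul R (canon R r) u \<in> fracs R"
      using u r unfolding frac_conductor_def by (auto intro: qmul_closed canon_in)
    fix x assume x: "x \<in> I"
    obtain r1 where r1: "r1 \<in> carrier R" "qmul R (canon R x) u = canon R r1"
      using u x unfolding frac_conductor_def by blast
    have "qmul R (canon R x) (qmul R (canon R r) u) = canon R (r \<otimes> r1)"
      using u x r r1 I unfolding frac_conductor_def
      by (auto simp: qmul_left_commute[of "canon R x"] canon_in qmul_canon)
    then show "qmul R (canon R x) (qmul R (canon R r) u) \<in> canon R ` carrier R" using r r1 by auto
  qed
qed

lemma conductor_product_subset:
  assumes "v \<in> ideal_frac_prod R I (frac_conductor I)"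
  shows "v \<in> canon R ` carrier R"
  using assms
proof (induction rule: ideal_frac_prod_induct)
  case zero
  then show ?case by blast
next
  case (add i u v)
  then obtain r1 r2 where "r1 \<in> carrier R" "qmul R (canon R i) u = canon R r1"
      "r2 \<in> carrier R" "v = canon R r2"
    unfolding frac_conductor_def by blast
  then show ?case by (auto simp: qadd_canon)
qed

end

section \<open>Sums of products and the colon ideal \<open>(a R : I)\<close>\<close>

text \<open>\<open>prod_sums R I L\<close> is the set of finite sums of products \<open>y z\<close> with \<open>y \<in> I\<close>, \<open>z \<in> L\<close>;
  for ideals it is the ideal product \<open>I L\<close>.\<close>
inductive_set prod_sums :: "('a, 'm) ring_scheme \<Rightarrow> 'a set \<Rightarrow> 'a set \<Rightarrow> 'a set"
  for R I L where
  zero: "\<zero>\<^bsub>R\<^esub> \<in> prod_sums R I L"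
| add: "p \<in> prod_sums R I L \<Longrightarrow> y \<in> I \<Longrightarrow> z \<in> L \<Longrightarrow> y \<otimes>\<^bsub>R\<^esub> z \<oplus>\<^bsub>R\<^esub> p \<in> prod_sums R I L"

definition principal_colon :: "('a, 'm) ring_scheme \<Rightarrow> 'a \<Rightarrow> 'a set \<Rightarrow> 'a set" where
  "principal_colon R a I = {z \<in> carrier R. \<forall>x \<in> I. \<exists>w \<in> carrier R. x \<otimes>\<^bsub>R\<^esub> z = a \<otimes>\<^bsub>R\<^esub> w}"

context cring
begin

lemma prod_sums_carrier: "p \<in> prod_sums R I L \<Longrightarrow> I \<subseteq> carrier R \<Longrightarrow> L \<subseteq> carrier R \<Longrightarrow> p \<in> carrier R"
  by (induction rule: prod_sums.induct) auto

lemma prod_sums_mult_closed: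
  assumes "p \<in> prod_sums R I L" "r \<in> carrier R" "I \<subseteq> carrier R" "L \<subseteq> carrier R"
    and L_closed: "\<And>z. z \<in> L \<Longrightarrow> z \<otimes> r \<in> L"
  shows "p \<otimes> r \<in> prod_sums R I L"
  using assms(1)
proof (induction rule: prod_sums.induct)
  case zero
  then show ?case using assms(2) by (simp add: prod_sums.zero)
next
  case (add p y z)
  have "p \<in> carrier R" "y \<in> carrier R" "z \<in> carrier R"
    using add prod_sums_carrier assms by auto
  then have "(y \<otimes> z \<oplus> p) \<otimes> r = y \<otimes> (z \<otimes> r) \<oplus> p \<otimes> r"
    using assms(2) by (simp add: l_distr m_assoc)
  then show ?case using add L_closed by (simp add: prod_sums.add)
qed

lemma principal_colon_mult_closed:
  assumes "z \<in> principal_colon R a I" "r \<in> carrier R" "a \<in> carrier R" "I \<subseteq> carrier R"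
  shows "z \<otimes> r \<in> principal_colon R a I"
  unfolding principal_colon_def
proof (intro CollectI conjI ballI)
  show "z \<otimes> r \<in> carrier R" using assms by (simp add: principal_colon_def)
  fix x assume x: "x \<in> I"
  then obtain w where "w \<in> carrier R" "x \<otimes> z = a \<otimes> w"
    using assms(1) by (auto simp: principal_colon_def)
  then have "x \<otimes> (z \<otimes> r) = a \<otimes> (w \<otimes> r)" "w \<otimes> r \<in> carrier R"
    using assms x by (auto simp: principal_colon_def m_assoc[symmetric])
  then show "\<exists>w \<in> carrier R. x \<otimes> (z \<otimes> r) = a \<otimes> w" by blast
qed

lemma colon_frac_in_conductor:
  assumes I: "I \<subseteq> carrier R" and a: "a \<in> regs R" and z: "z \<in> principal_colon R a I"
  shows "frac R z a \<in> frac_conductor I"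
  unfolding frac_conductor_def
proof (intro CollectI conjI ballI)
  have zc: "z \<in> carrier R" using z by (simp add: principal_colon_def)
  then show "frac R z a \<in> fracs R" using a by (simp add: frac_in)
  fix x assume x: "x \<in> I"
  obtain w where w: "w \<in> carrier R" "x \<otimes> z = a \<otimes> w"
    using z x by (auto simp: principal_colon_def)
  have "qmul R (canon R x) (frac R z a) = frac R (a \<otimes> w) a"
    using x I zc a w by (simp add: subsetD qmul_canon_frac)
  also have "\<dots> = canon R w" using w a by (simp add: frac_cancel)
  finally show "qmul R (canon R x) (frac R z a) \<in> canon R ` carrier R" using w by blast
qed

lemma prod_sums_frac_in_product:
  assumes I: "I \<subseteq> carrier R" and a: "a \<in> regs R"
    and p: "p \<in> prod_sums R I (principal_colon R a I)"
  shows "frac R p a \<in> ideal_frac_prod R I (frac_conductor I)"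
  using p
proof (induction rule: prod_sums.induct)
  case zero
  have "frac R \<zero> a = canon R \<zero>"
    unfolding canon_def using a by (simp add: frac_eq_iff one_regs regs_carrier)
  then show ?case by (simp add: ideal_frac_prod_zero)
next
  case (add p y z)
  have L: "principal_colon R a I \<subseteq> carrier R" by (auto simp: principal_colon_def)
  have c: "p \<in> carrier R" "y \<in> carrier R" "z \<in> carrier R"
    using add prod_sums_carrier[OF add.hyps(1) I L] I L by auto
  have "frac R (y \<otimes> z \<oplus> p) a = qadd R (qmul R (canon R y) (frac R z a)) (frac R p a)"
    using a c by (simp add: qmul_canon_frac qadd_frac_same_denom)
  also have "\<dots> \<in> ideal_frac_prod R I (frac_conductor I)"
    using add colon_frac_in_conductor[OF I a] by (intro ideal_frac_prod_add)
  finally show ?case .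
qed

lemma invertible_if_in_product_with_colon:
  assumes I: "I \<subseteq> carrier R" and a: "a \<in> regs R"
    and a_in: "a \<in> prod_sums R I (principal_colon R a I)"
  shows "invertible_ideal R I"
  unfolding invertible_ideal_def
proof (intro exI conjI)
  show "frac_submodule R (frac_conductor I)" using I by (rule frac_submodule_conductor)
  show "ideal_frac_prod R I (frac_conductor I) = canon R ` carrier R"
  proof
    show "ideal_frac_prod R I (frac_conductor I) \<subseteq> canon R ` carrier R"
      using conductor_product_subset by blast
    show "canon R ` carrier R \<subseteq> ideal_frac_prod R I (frac_conductor I)"
    proof
      fix v assume "v \<in> canon R ` carrier R"
      then obtain r where r: "r \<in> carrier R" "v = canon R r" by blast
      have ac: "a \<in> carrier R" using a by (rule regs_carrier)
      have "a \<otimes> r \<in> prod_sums R I (principal_colon R a I)"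
        using a_in r I ac by (intro prod_sums_mult_closed principal_colon_mult_closed)
          (auto simp: principal_colon_def)
      then have "frac R (a \<otimes> r) a \<in> ideal_frac_prod R I (frac_conductor I)"
        by (rule prod_sums_frac_in_product[OF I a])
      then show "v \<in> ideal_frac_prod R I (frac_conductor I)" using r a by (simp add: frac_cancel)
    qed
  qed
qed

end

section \<open>Ideals under a ring retraction\<close>

lemma genideal_image_subset:
  assumes "ring A" "ring R" and h: "h \<in> ring_hom A R" and S: "S \<subseteq> carrier A"
  shows "h ` genideal A S \<subseteq> genideal R (h ` S)"
proof -
  interpret A: ring A by fact
  interpret R: ring R by fact
  interpret h: ring_hom_ring A R h by (rule ring_hom_ringI2) fact+
  have hS: "h ` S \<subseteq> carrier R" using S ring_hom_closed[OF h] by blast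
  have "ideal {x \<in> carrier A. h x \<in> genideal R (h ` S)} A"
    by (rule h.ideal_vimage[OF R.genideal_ideal[OF hS]])
  moreover have "S \<subseteq> {x \<in> carrier A. h x \<in> genideal R (h ` S)}"
    using S R.genideal_self[OF hS] by auto
  ultimately have "genideal A S \<subseteq> {x \<in> carrier A. h x \<in> genideal R (h ` S)}"
    by (rule A.genideal_minimal)
  then show ?thesis by auto
qed

locale ring_retract = A: cring A + R: cring R
  for A (structure) and R (structure) +
  fixes emb proj
  assumes emb_hom: "emb \<in> ring_hom A R" and proj_hom: "proj \<in> ring_hom R A"
    and proj_emb: "x \<in> carrier A \<Longrightarrow> proj (emb x) = x"
begin

text \<open>For \<open>a \<in> I\<close> and \<open>u \<in> M\<close>, the product \<open>emb(a) u\<close> lies in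
  \<open>R\<close>, and its projection lies in \<open>(a A : I)\<close>: for \<open>x \<in> I\<close> one has
  \<open>emb(x) (emb(a) u) = emb(a) (emb(x) u)\<close> with \<open>emb(x) u \<in> R\<close>.\<close>
lemma inverse_times_emb_in_colon:
  assumes I: "I \<subseteq> carrier A" and I': "I' \<subseteq> carrier R" and emb_I: "emb ` I \<subseteq> I'"
    and a: "a \<in> I"
    and IM: "ideal_frac_prod R I' M = canon R ` carrier R" and M: "M \<subseteq> fracs R" and u: "u \<in> M"
  obtains t where "t \<in> carrier R" "qmul R (canon R (emb a)) u = canon R t"
    "proj t \<in> principal_colon A a I"
proof -
  have in_ring: "\<exists>t \<in> carrier R. qmul R (canon R (emb x)) u = canon R t" if "x \<in> I" for x
    using R.invertible_product_in_ring[OF IM M I'] emb_I u that by blast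
  have emb_carrier: "emb x \<in> carrier R" if "x \<in> I" for x
    using that I ring_hom_closed[OF emb_hom] by blast
  obtain t where t: "t \<in> carrier R" "qmul R (canon R (emb a)) u = canon R t"
    using in_ring[OF a] by blast
  have "proj t \<in> principal_colon A a I"
    unfolding principal_colon_def
  proof (intro CollectI conjI ballI)
    show "proj t \<in> carrier A" using ring_hom_closed[OF proj_hom t(1)] .
    fix x assume x: "x \<in> I"
    obtain t' where t': "t' \<in> carrier R" "qmul R (canon R (emb x)) u = canon R t'"
      using in_ring[OF x] by blast
    have ea: "emb a \<in> carrier R" and ex: "emb x \<in> carrier R" using a x by (auto intro: emb_carrier)
    have uf: "u \<in> fracs R" using u M by auto
    have "canon R (emb x \<otimes>\<^bsub>R\<^esub> t) = qmul R (canon R (emb x)) (qmul R (canon R (emb a)) u)"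
      using ex t by (simp add: R.qmul_canon)
    also have "\<dots> = qmul R (canon R (emb a)) (qmul R (canon R (emb x)) u)"
      using ea ex uf by (simp add: R.qmul_left_commute R.canon_in)
    also have "\<dots> = canon R (emb a \<otimes>\<^bsub>R\<^esub> t')" using ea t' by (simp add: R.qmul_canon)
    finally have "emb x \<otimes>\<^bsub>R\<^esub> t = emb a \<otimes>\<^bsub>R\<^esub> t'" using ea ex t t' by (intro R.canon_inj) auto
    then have "proj (emb x \<otimes>\<^bsub>R\<^esub> t) = proj (emb a \<otimes>\<^bsub>R\<^esub> t')" by simp
    moreover have "x \<in> carrier A" "a \<in> carrier A" using x a I by auto
    ultimately have "x \<otimes>\<^bsub>A\<^esub> proj t = a \<otimes>\<^bsub>A\<^esub> proj t'"
      using ea ex t t' by (simp add: ring_hom_mult[OF proj_hom] proj_emb)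
    then show "\<exists>w \<in> carrier A. x \<otimes>\<^bsub>A\<^esub> proj t = a \<otimes>\<^bsub>A\<^esub> w"
      using ring_hom_closed[OF proj_hom t'(1)] by blast
  qed
  then show ?thesis using t that by blast
qed

text \<open>Write \<open>1 = \<Sum> x\<^sub>k u\<^sub>k\<close> with \<open>x\<^sub>k \<in> I'\<close>, \<open>u\<^sub>k \<in> I'\<^sup>-\<^sup>1\<close>;
  multiplying by \<open>emb(a)\<close> and applying \<open>proj\<close> gives \<open>a = \<Sum> proj(x\<^sub>k) proj(emb(a) u\<^sub>k)\<close>.\<close>
lemma retract_in_product_with_colon:
  assumes I: "I \<subseteq> carrier A" and I': "I' \<subseteq> carrier R"
    and emb_I: "emb ` I \<subseteq> I'" and proj_I': "proj ` I' \<subseteq> I"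
    and inv: "invertible_ideal R I'" and a: "a \<in> I"
  shows "a \<in> prod_sums A I (principal_colon A a I)"
proof -
  obtain M where "frac_submodule R M" and IM: "ideal_frac_prod R I' M = canon R ` carrier R"
    using inv unfolding invertible_ideal_def by blast
  then have M: "M \<subseteq> fracs R" by (simp add: frac_submodule_def)
  have ea: "emb a \<in> carrier R" using a I ring_hom_closed[OF emb_hom] by blast
  define c where "c = canon R (emb a)"
  have c: "c \<in> fracs R" unfolding c_def using ea by (rule R.canon_in)
  have "\<exists>t \<in> carrier R. qmul R c v = canon R t \<and> proj t \<in> prod_sums A I (principal_colon A a I)"
    if "v \<in> ideal_frac_prod R I' M" for v
    using that
  proof (induction rule: ideal_frac_prod_induct)
    case zero
    have "qmul R c (canon R \<zero>\<^bsub>R\<^esub>) = canon R \<zero>\<^bsub>R\<^esub>" using c by (rule R.qmul_zero)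
    moreover have "proj \<zero>\<^bsub>R\<^esub> = \<zero>\<^bsub>A\<^esub>" by (rule ring_hom_zero[OF proj_hom R.ring_axioms A.ring_axioms])
    ultimately show ?case using R.zero_closed prod_sums.zero[of A I] by metis
  next
    case (add i u v)
    obtain t where t: "t \<in> carrier R" "qmul R c v = canon R t"
      "proj t \<in> prod_sums A I (principal_colon A a I)"
      using add.IH by blast
    obtain s where s: "s \<in> carrier R" "qmul R c u = canon R s" "proj s \<in> principal_colon A a I"
      using inverse_times_emb_in_colon[OF I I' emb_I a IM M add.hyps(2)] unfolding c_def by blast
    have i: "i \<in> carrier R" using add.hyps(1) I' by auto
    have uf: "u \<in> fracs R" using M add.hyps(2) by auto
    have vf: "v \<in> fracs R" using add.hyps(3) IM R.canon_in by auto
    have iu: "qmul R (canon R i) u \<in> fracs R" using i uf by (simp add: R.qmul_closed R.canon_in)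
    have "qmul R c (qadd R (qmul R (canon R i) u) v)
        = qadd R (qmul R c (qmul R (canon R i) u)) (qmul R c v)"
      using c iu vf by (rule R.qmul_qadd_distr)
    also have "\<dots> = qadd R (qmul R (canon R i) (qmul R c u)) (qmul R c v)"
      using c i uf by (simp add: R.qmul_left_commute R.canon_in)
    also have "\<dots> = canon R (i \<otimes>\<^bsub>R\<^esub> s \<oplus>\<^bsub>R\<^esub> t)"
      using i s t by (simp add: R.qmul_canon R.qadd_canon)
    finally have "qmul R c (qadd R (qmul R (canon R i) u) v) = canon R (i \<otimes>\<^bsub>R\<^esub> s \<oplus>\<^bsub>R\<^esub> t)" .
    moreover have "proj (i \<otimes>\<^bsub>R\<^esub> s \<oplus>\<^bsub>R\<^esub> t) = proj i \<otimes>\<^bsub>A\<^esub> proj s \<oplus>\<^bsub>A\<^esub> proj t"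
      using i s t by (simp add: ring_hom_mult[OF proj_hom] ring_hom_add[OF proj_hom])
    moreover have "proj i \<otimes>\<^bsub>A\<^esub> proj s \<oplus>\<^bsub>A\<^esub> proj t \<in> prod_sums A I (principal_colon A a I)"
      by (rule prod_sums.add[OF t(3) _ s(3)]) (use proj_I' add.hyps(1) in blast)
    moreover have "i \<otimes>\<^bsub>R\<^esub> s \<oplus>\<^bsub>R\<^esub> t \<in> carrier R" using i s t by simp
    ultimately show ?case by (intro bexI[of _ "i \<otimes>\<^bsub>R\<^esub> s \<oplus>\<^bsub>R\<^esub> t"] conjI) simp_all
  qed
  moreover have "canon R \<one>\<^bsub>R\<^esub> \<in> ideal_frac_prod R I' M" using IM by simp
  ultimately obtain t where t: "t \<in> carrier R" "qmul R c (canon R \<one>\<^bsub>R\<^esub>) = canon R t"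
    "proj t \<in> prod_sums A I (principal_colon A a I)"
    by blast
  have "canon R t = canon R (emb a)" using t(2) ea by (simp add: c_def R.qmul_canon)
  then have "t = emb a" by (rule R.canon_inj[OF t(1) ea])
  then show ?thesis using t(3) a I proj_emb by auto
qed

end

section \<open>The amalgamated algebra\<close>

lemma RDirProd_ops:
  "(a, b) \<otimes>\<^bsub>RDirProd A B\<^esub> (c, d) = (a \<otimes>\<^bsub>A\<^esub> c, b \<otimes>\<^bsub>B\<^esub> d)"
  "(a, b) \<oplus>\<^bsub>RDirProd A B\<^esub> (c, d) = (a \<oplus>\<^bsub>A\<^esub> c, b \<oplus>\<^bsub>B\<^esub> d)"
  "\<one>\<^bsub>RDirProd A B\<^esub> = (\<one>\<^bsub>A\<^esub>, \<one>\<^bsub>B\<^esub>)" "\<zero>\<^bsub>RDirProd A B\<^esub> = (\<zero>\<^bsub>A\<^esub>, \<zero>\<^bsub>B\<^esub>)"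
  by (simp_all add: RDirProd_def DirProd_def monoid.defs)

lemma RDirProd_a_inv:
  assumes "ring A" "ring B" "a \<in> carrier A" "b \<in> carrier B"
  shows "\<ominus>\<^bsub>RDirProd A B\<^esub> (a, b) = (\<ominus>\<^bsub>A\<^esub> a, \<ominus>\<^bsub>B\<^esub> b)"
  unfolding a_inv_def RDirProd_add_monoid
  using assms by (intro inv_DirProd abelian_group.a_group ring.is_abelian_group) simp_all

lemma amalg_restrict: "amalg A B f J = (RDirProd A B)\<lparr>carrier := carrier (amalg A B f J)\<rparr>"
  by (simp add: amalg_def)

lemma amalg_ops:
  "(a, b) \<otimes>\<^bsub>amalg A B f J\<^esub> (c, d) = (a \<otimes>\<^bsub>A\<^esub> c, b \<otimes>\<^bsub>B\<^esub> d)"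
  "(a, b) \<oplus>\<^bsub>amalg A B f J\<^esub> (c, d) = (a \<oplus>\<^bsub>A\<^esub> c, b \<oplus>\<^bsub>B\<^esub> d)"
  "\<one>\<^bsub>amalg A B f J\<^esub> = (\<one>\<^bsub>A\<^esub>, \<one>\<^bsub>B\<^esub>)" "\<zero>\<^bsub>amalg A B f J\<^esub> = (\<zero>\<^bsub>A\<^esub>, \<zero>\<^bsub>B\<^esub>)"
  by (simp_all add: amalg_def RDirProd_ops[symmetric])

lemma amalg_carrier:
  "(x, y) \<in> carrier (amalg A B f J) \<longleftrightarrow> x \<in> carrier A \<and> (\<exists>j \<in> J. y = f x \<oplus>\<^bsub>B\<^esub> j)"
  by (auto simp: amalg_def)

locale amalgamation = A: cring A + B: cring B
  for A (structure) and B (structure) +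
  fixes f and J
  assumes f_hom: "f \<in> ring_hom A B" and J: "ideal J B"
begin

sublocale f: ring_hom_cring A B f
  by (intro ring_hom_cring.intro ring_hom_cring_axioms.intro A.cring_axioms B.cring_axioms f_hom)

lemma J_carrier: "j \<in> J \<Longrightarrow> j \<in> carrier B"
  using ideal.Icarr[OF J] .

lemma amalg_elem:
  assumes "h \<in> carrier (amalg A B f J)"
  obtains x j where "h = (x, f x \<oplus>\<^bsub>B\<^esub> j)" "x \<in> carrier A" "j \<in> J"
  using assms by (auto simp: amalg_def)

text \<open>The product of \<open>(x, f x + j)\<close> and \<open>(y, f y + k)\<close> is \<open>(x y, f(x y) + j')\<close> with
  \<open>j' = f(x) k + j (f(y) + k) \<in> J\<close>.\<close>
lemma amalg_mult_closed:
  assumes "x \<in> carrier A" "y \<in> carrier A" "j \<in> J" "k \<in> J"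
  shows "(x \<otimes>\<^bsub>A\<^esub> y, (f x \<oplus>\<^bsub>B\<^esub> j) \<otimes>\<^bsub>B\<^esub> (f y \<oplus>\<^bsub>B\<^esub> k)) \<in> carrier (amalg A B f J)"
proof -
  have c: "j \<in> carrier B" "k \<in> carrier B" "f x \<in> carrier B" "f y \<in> carrier B"
    using assms J_carrier by auto
  have "(f x \<oplus>\<^bsub>B\<^esub> j) \<otimes>\<^bsub>B\<^esub> (f y \<oplus>\<^bsub>B\<^esub> k)
      = f (x \<otimes>\<^bsub>A\<^esub> y) \<oplus>\<^bsub>B\<^esub> (f x \<otimes>\<^bsub>B\<^esub> k \<oplus>\<^bsub>B\<^esub> j \<otimes>\<^bsub>B\<^esub> (f y \<oplus>\<^bsub>B\<^esub> k))"
    using assms c by (simp add: B.l_distr B.r_distr B.a_ac)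
  moreover have "f x \<otimes>\<^bsub>B\<^esub> k \<oplus>\<^bsub>B\<^esub> j \<otimes>\<^bsub>B\<^esub> (f y \<oplus>\<^bsub>B\<^esub> k) \<in> J"
    using assms c by (intro ideal.I_l_closed ideal.I_r_closed additive_subgroup.a_closed
        ideal.axioms(1) J B.add.m_closed)
  ultimately show ?thesis using assms by (auto simp: amalg_carrier)
qed

lemma amalg_subring: "subring (carrier (amalg A B f J)) (RDirProd A B)"
proof -
  interpret P: ring "RDirProd A B" by (rule RDirProd_ring[OF A.ring_axioms B.ring_axioms])
  have J0: "\<zero>\<^bsub>B\<^esub> \<in> J" and J_add: "\<And>j k. j \<in> J \<Longrightarrow> k \<in> J \<Longrightarrow> j \<oplus>\<^bsub>B\<^esub> k \<in> J"
    and J_neg: "\<And>j. j \<in> J \<Longrightarrow> \<ominus>\<^bsub>B\<^esub> j \<in> J"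
    using ideal.axioms(1)[OF J]
    by (auto intro: additive_subgroup.zero_closed additive_subgroup.a_closed additive_subgroup.a_inv_closed)
  show ?thesis
  proof (rule P.subringI)
    show "carrier (amalg A B f J) \<subseteq> carrier (RDirProd A B)"
      by (auto simp: amalg_def RDirProd_carrier J_carrier)
    show "\<one>\<^bsub>RDirProd A B\<^esub> \<in> carrier (amalg A B f J)"
      unfolding RDirProd_ops amalg_carrier using J0 by (intro conjI bexI[of _ "\<zero>\<^bsub>B\<^esub>"]) simp_all
  next
    fix h assume "h \<in> carrier (amalg A B f J)"
    then obtain x j where h: "h = (x, f x \<oplus>\<^bsub>B\<^esub> j)" "x \<in> carrier A" "j \<in> J" by (rule amalg_elem)
    then have "\<ominus>\<^bsub>RDirProd A B\<^esub> h = (\<ominus>\<^bsub>A\<^esub> x, f (\<ominus>\<^bsub>A\<^esub> x) \<oplus>\<^bsub>B\<^esub> \<ominus>\<^bsub>B\<^esub> j)"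
      using J_carrier
      by (simp add: RDirProd_a_inv A.ring_axioms B.ring_axioms B.minus_add)
    then show "\<ominus>\<^bsub>RDirProd A B\<^esub> h \<in> carrier (amalg A B f J)"
      using h J_neg by (auto simp: amalg_carrier)
  next
    fix h1 h2 assume "h1 \<in> carrier (amalg A B f J)" "h2 \<in> carrier (amalg A B f J)"
    then obtain x j y k where h: "h1 = (x, f x \<oplus>\<^bsub>B\<^esub> j)" "h2 = (y, f y \<oplus>\<^bsub>B\<^esub> k)"
      and xy: "x \<in> carrier A" "y \<in> carrier A" "j \<in> J" "k \<in> J"
      by (metis amalg_elem)
    show "h1 \<otimes>\<^bsub>RDirProd A B\<^esub> h2 \<in> carrier (amalg A B f J)"
      using amalg_mult_closed[OF xy] by (simp add: h RDirProd_ops)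
    have "f x \<oplus>\<^bsub>B\<^esub> j \<oplus>\<^bsub>B\<^esub> (f y \<oplus>\<^bsub>B\<^esub> k) = f (x \<oplus>\<^bsub>A\<^esub> y) \<oplus>\<^bsub>B\<^esub> (j \<oplus>\<^bsub>B\<^esub> k)"
      using xy J_carrier by (simp add: B.a_ac)
    then show "h1 \<oplus>\<^bsub>RDirProd A B\<^esub> h2 \<in> carrier (amalg A B f J)"
      using xy J_add by (auto simp: h RDirProd_ops amalg_carrier)
  qed
qed

lemma amalg_cring: "cring (amalg A B f J)"
proof -
  interpret P: ring "RDirProd A B" by (rule RDirProd_ring[OF A.ring_axioms B.ring_axioms])
  have "subcring (carrier (amalg A B f J)) (RDirProd A B)"
  proof (rule P.subcringI[OF amalg_subring])
    fix h1 h2 assume "h1 \<in> carrier (amalg A B f J)" "h2 \<in> carrier (amalg A B f J)"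
    then obtain x j y k where "h1 = (x, f x \<oplus>\<^bsub>B\<^esub> j)" "h2 = (y, f y \<oplus>\<^bsub>B\<^esub> k)"
      "x \<in> carrier A" "y \<in> carrier A" "j \<in> J" "k \<in> J"
      by (metis amalg_elem)
    then show "h1 \<otimes>\<^bsub>RDirProd A B\<^esub> h2 = h2 \<otimes>\<^bsub>RDirProd A B\<^esub> h1"
      using J_carrier by (simp add: RDirProd_ops A.m_comm B.m_comm)
  qed
  then show ?thesis
    using P.subcring_iff[OF subringE(1)[OF amalg_subring]] amalg_restrict by metis
qed

lemma diag_carrier: "x \<in> carrier A \<Longrightarrow> (x, f x) \<in> carrier (amalg A B f J)"
  unfolding amalg_carrier using additive_subgroup.zero_closed[OF ideal.axioms(1)[OF J]]
  by (intro conjI bexI[of _ "\<zero>\<^bsub>B\<^esub>"]) simp_all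

lemma amalg_retract: "ring_retract A (amalg A B f J) (\<lambda>x. (x, f x)) fst"
proof -
  interpret D: cring "amalg A B f J" by (rule amalg_cring)
  have fst_carrier: "fst h \<in> carrier A" if "h \<in> carrier (amalg A B f J)" for h
    using that by (auto simp: amalg_def)
  show ?thesis
  proof (unfold_locales)
    show "(\<lambda>x. (x, f x)) \<in> ring_hom A (amalg A B f J)"
      by (rule ring_hom_memI) (simp_all add: diag_carrier amalg_ops)
    show "fst \<in> ring_hom (amalg A B f J) A"
    proof (rule ring_hom_memI)
      fix h1 h2 assume "h1 \<in> carrier (amalg A B f J)" "h2 \<in> carrier (amalg A B f J)"
      then show "fst (h1 \<otimes>\<^bsub>amalg A B f J\<^esub> h2) = fst h1 \<otimes>\<^bsub>A\<^esub> fst h2"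
        "fst (h1 \<oplus>\<^bsub>amalg A B f J\<^esub> h2) = fst h1 \<oplus>\<^bsub>A\<^esub> fst h2"
        by (cases h1, cases h2, simp add: amalg_ops)+
    qed (simp_all add: fst_carrier amalg_ops)
  qed simp
qed

lemma diag_regs:
  assumes a: "a \<in> regs A" and fa: "f a \<in> regs B"
  shows "(a, f a) \<in> regs (amalg A B f J)"
  unfolding regs_def
proof (intro CollectI conjI ballI impI)
  show "(a, f a) \<in> carrier (amalg A B f J)" using a by (simp add: diag_carrier regs_def)
  fix h assume "h \<in> carrier (amalg A B f J)"
    and e: "(a, f a) \<otimes>\<^bsub>amalg A B f J\<^esub> h = \<zero>\<^bsub>amalg A B f J\<^esub>"
  from \<open>h \<in> carrier (amalg A B f J)\<close> obtain x j where h: "h = (x, f x \<oplus>\<^bsub>B\<^esub> j)" "x \<in> carrier A" "j \<in> J" by (rule amalg_elem)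
  have "a \<otimes>\<^bsub>A\<^esub> x = \<zero>\<^bsub>A\<^esub>" using e by (simp add: h amalg_ops)
  then have x0: "x = \<zero>\<^bsub>A\<^esub>" using a h(2) by (simp add: regs_def)
  then have "f a \<otimes>\<^bsub>B\<^esub> j = \<zero>\<^bsub>B\<^esub>" using e h J_carrier by (simp add: amalg_ops)
  then have "j = \<zero>\<^bsub>B\<^esub>" using fa h(3) J_carrier by (simp add: regs_def)
  then show "h = \<zero>\<^bsub>amalg A B f J\<^esub>" using h x0 by (simp add: amalg_ops)
qed

lemma genideal_diag_between:
  assumes S: "S \<subseteq> carrier A"
  shows "(\<lambda>x. (x, f x)) ` genideal A S \<subseteq> genideal (amalg A B f J) ((\<lambda>x. (x, f x)) ` S)"
    and "fst ` genideal (amalg A B f J) ((\<lambda>x. (x, f x)) ` S) \<subseteq> genideal A S"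
proof -
  interpret D: ring_retract A "amalg A B f J" "\<lambda>x. (x, f x)" fst by (rule amalg_retract)
  have diag_S: "(\<lambda>x. (x, f x)) ` S \<subseteq> carrier (amalg A B f J)" using S diag_carrier by blast
  show "(\<lambda>x. (x, f x)) ` genideal A S \<subseteq> genideal (amalg A B f J) ((\<lambda>x. (x, f x)) ` S)"
    by (rule genideal_image_subset[OF A.ring_axioms D.R.ring_axioms D.emb_hom S])
  have "fst ` genideal (amalg A B f J) ((\<lambda>x. (x, f x)) ` S) \<subseteq> genideal A (fst ` (\<lambda>x. (x, f x)) ` S)"
    by (rule genideal_image_subset[OF D.R.ring_axioms A.ring_axioms D.proj_hom diag_S])
  then show "fst ` genideal (amalg A B f J) ((\<lambda>x. (x, f x)) ` S) \<subseteq> genideal A S"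
    by (simp add: image_image)
qed

end

theorem lemma2p5:
  fixes A :: "('a, 'm) ring_scheme" and B :: "('b, 'n) ring_scheme"
    and f :: "'a \<Rightarrow> 'b" and J :: "'b set"
  assumes "cring A" and "cring B"
    and "f \<in> ring_hom A B"
    and "ideal J B" and "J \<noteq> carrier B"
    and "f ` regs A \<subseteq> regs B"
    and "prufer_ring (amalg A B f J)"
  shows "prufer_ring A"
  unfolding prufer_ring_def
proof (intro allI impI)
  interpret amalgamation A B f J using assms by (simp add: amalgamation_def amalgamation_axioms_def)
  interpret D: ring_retract A "amalg A B f J" "\<lambda>x. (x, f x)" fst by (rule amalg_retract)
  let ?D = "amalg A B f J" and ?diag = "\<lambda>x. (x, f x)"
  fix I assume "ideal I A \<and> (\<exists>S. finite S \<and> S \<subseteq> carrier A \<and> I = genideal A S) \<and> I \<inter> regs A \<noteq> {}"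
  then obtain S a where S: "finite S" "S \<subseteq> carrier A" and I: "I = genideal A S"
    and a: "a \<in> I" "a \<in> regs A"
    by blast
  define I' where "I' = genideal ?D (?diag ` S)"
  have diag_S: "?diag ` S \<subseteq> carrier ?D" using S(2) diag_carrier by blast
  have I'_ideal: "ideal I' ?D" unfolding I'_def by (rule D.R.genideal_ideal[OF diag_S])
  have diag_I: "?diag ` I \<subseteq> I'" and fst_I': "fst ` I' \<subseteq> I"
    unfolding I I'_def using genideal_diag_between[OF S(2)] by blast+
  have I_carrier: "I \<subseteq> carrier A" using ideal.Icarr[OF A.genideal_ideal[OF S(2)]] I by blast
  have I'_carrier: "I' \<subseteq> carrier ?D" using ideal.Icarr[OF I'_ideal] by blast
  have "f a \<in> regs B" using assms(6) a(2) by blast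
  then have "(a, f a) \<in> I' \<inter> regs ?D" using diag_I a diag_regs by blast
  moreover have "finite (?diag ` S)" using S(1) by simp
  ultimately have "invertible_ideal ?D I'"
    using assms(7) I'_ideal diag_S unfolding prufer_ring_def I'_def by blast
  then have "a \<in> prod_sums A I (principal_colon A a I)"
    by (rule D.retract_in_product_with_colon[OF I_carrier I'_carrier diag_I fst_I' _ a(1)])
  then show "invertible_ideal A I"
    by (rule A.invertible_if_in_product_with_colon[OF I_carrier a(2)])
qed

end
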